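(* Let $x_*\in\operatorname{int}A$ be a feasible point of problem $(\mathcal{P})$ such that $\Lambda(x_* )\ne\emptyset$ and for every $h\in C(x_* )\setminus\{0\}$ there exist $\lambda\in\Lambda(x_* )$ and $\alpha\in\alpha(x_*,\lambda)$ with $\langle h,\nabla^2_{xx}\mathcal{L}(x_*,\lambda,\alpha)h\rangle>0$. Then $x_*$ is a locally optimal solution of $(\mathcal{P})$ at which the second order growth condition holds.
   Context: Setting: $A\subseteq\mathbb{R}^d$ nonempty closed convex; $Y$ real Banach space with dual $Y^*$ and pairing $\langle\cdot,\cdot\rangle$; $K\subset Y$ nonempty closed convex cone; $W$ compact Hausdorff; $f:\mathbb{R}^d\times W\to\mathbb{R}$ differentiable in $x$ with $f,\nabla_xf$ jointly continuous; $G:\mathbb{R}^d\to Y$ continuously Fréchet differentiable; additionally $G$ is twice continuously Fréchet differentiable near $x_*$, $f(\cdot,\omega)$ is twice differentiable on a neighbourhood $\mathcal{O}(x_* )$ for every $\omega$, and $\nabla^2_{xx}f$ is continuous on $\mathcal{O}(x_* )\times W$. $F(x)=\max_\omega f(x,\omega)$, $W(x)=\{\omega:f(x,\omega)=F(x)\}$; $(\mathcal{P})$: minimise $F$ s.t. $G(x)\in K$, $x\in A$; feasible set $\Omega$. Contingent cone $T_C(y)$: $h$ with $\alpha_n\downarrow0$, $h_n\to h$, $y+\alpha_nh_n\in C$. $K^*=\{y^*:\langle y^*,y\rangle\le0\ \forall y\in K\}$. $\Lambda(x_* )$: set of $\lambda\in K^*$ with $\langle\lambda,G(x_* )\rangle=0$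 and $[F+\langle\lambda,G\rangle]'(x_*,h)\ge0$ for all $h\in T_A(x_* )$. $\alpha(x_*,\lambda)$: set of nonnegative regular Borel measures $\alpha$ on $W$ with $\operatorname{supp}\alpha\subseteq W(x_* )$, $\alpha(W)=1$, and $\langle\int_W\nabla_xf(x_*,\omega)d\alpha,h\rangle+\langle\lambda,DG(x_* )h\rangle\ge0$ for all $h\in T_A(x_* )$. $\langle h,\nabla^2_{xx}\mathcal{L}(x,\lambda,\alpha)h\rangle=\int_W\langle h,\nabla^2_{xx}f(x,\omega)h\rangle d\alpha(\omega)+\langle\lambda,D^2G(x)(h,h)\rangle$. Critical cone $C(x_* )=\{h\in T_A(x_* ):DG(x_* )h\in T_K(G(x_* )),\ \max_{\omega\in W(x_* )}\langle\nabla_xf(x_*,\omega),h\rangle\le0\}$. Second order growth at $x_*$: $\exists\rho>0$ and a neighbourhood $\mathcal{O}$ with $F(x)\ge F(x_* )+\rho|x-x_*|^2$ for all $x\in\mathcal{O}\cap\Omega$. *)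

theory Defs
  imports "HOL-Analysis.Analysis"
begin

definition contingent_cone :: "'a::real_normed_vector set \<Rightarrow> 'a \<Rightarrow> 'a set" where
  "contingent_cone C y = {h. \<exists>(\<alpha>::nat \<Rightarrow> real) (hn::nat \<Rightarrow> 'a).
      (\<forall>n. \<alpha> n > 0) \<and> decseq \<alpha> \<and> \<alpha> \<longlonglongrightarrow> 0 \<and> hn \<longlonglongrightarrow> h \<and> (\<forall>n. y + \<alpha> n *\<^sub>R hn n \<in> C)}"

definition polar_cone :: "'y::real_normed_vector set \<Rightarrow> ('y \<Rightarrow>\<^sub>L real) set" where
  "polar_cone K = {ys. \<forall>y\<in>K. blinfun_apply ys y \<le> 0}"

definition maxfun :: "('a \<Rightarrow> 'w \<Rightarrow> real) \<Rightarrow> 'a \<Rightarrow> real" where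
  "maxfun f x = Sup (range (f x))"

definition active_set :: "('a \<Rightarrow> 'w \<Rightarrow> real) \<Rightarrow> 'a \<Rightarrow> 'w set" where
  "active_set f x = {\<omega>. f x \<omega> = maxfun f x}"

definition feasible_set :: "'a set \<Rightarrow> 'y set \<Rightarrow> ('a \<Rightarrow> 'y) \<Rightarrow> 'a set" where
  "feasible_set A K G = {x\<in>A. G x \<in> K}"

definition multipliers ::
  "'a::real_normed_vector set \<Rightarrow> 'y::real_normed_vector set \<Rightarrow> ('a \<Rightarrow> 'y) \<Rightarrow> ('a \<Rightarrow> 'w \<Rightarrow> real)
     \<Rightarrow> 'a \<Rightarrow> ('y \<Rightarrow>\<^sub>L real) set" where
  "multipliers A K G f x = {l \<in> polar_cone K. blinfun_apply l (G x) = 0 \<and>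
     (\<forall>h \<in> contingent_cone A x. \<exists>L. L \<ge> 0 \<and>
        ((\<lambda>t. ((maxfun f (x + t *\<^sub>R h) + blinfun_apply l (G (x + t *\<^sub>R h)))
               - (maxfun f x + blinfun_apply l (G x))) / t) \<longlongrightarrow> L) (at_right 0))}"

definition regular_borel_measure :: "'w::topological_space measure \<Rightarrow> bool" where
  "regular_borel_measure M \<longleftrightarrow> sets M = sets borel \<and>
     (\<forall>B\<in>sets M. emeasure M B = (INF U\<in>{U. open U \<and> B \<subseteq> U}. emeasure M U) \<and>
                  emeasure M B = (SUP C\<in>{C. compact C \<and> C \<subseteq> B}. emeasure M C))"

definition measure_support :: "'w::topological_space measure \<Rightarrow> 'w set" where
  "measure_support M = {\<omega>. \<forall>U. open U \<and> \<omega> \<in> U \<longrightarrow> emeasure M U > 0}"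

text \<open>The set alpha(x,lambda); fx is the gradient of f in x, DG the derivative of G.\<close>
definition alpha_set ::
  "'a::euclidean_space set \<Rightarrow> ('a \<Rightarrow> ('a \<Rightarrow>\<^sub>L 'y::real_normed_vector)) \<Rightarrow> ('a \<Rightarrow> 'w::topological_space \<Rightarrow> real)
     \<Rightarrow> ('a \<Rightarrow> 'w \<Rightarrow> 'a) \<Rightarrow> 'a \<Rightarrow> ('y \<Rightarrow>\<^sub>L real) \<Rightarrow> 'w measure set" where
  "alpha_set A DG f fx x l = {M. regular_borel_measure M \<and> measure_support M \<subseteq> active_set f x \<and>
      emeasure M (space M) = 1 \<and>
      (\<forall>h \<in> contingent_cone A x. (LINT \<omega>|M. fx x \<omega>) \<bullet> h + blinfun_apply l (blinfun_apply (DG x) h) \<ge> 0)}"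

text \<open><h, Hess_xx L(x,lambda,alpha) h>; fxx x w is the Hessian of f(.,w) at x, D2G the
  second derivative of G.\<close>
definition lagrangian_hess_form ::
  "('a::euclidean_space \<Rightarrow> 'w::topological_space \<Rightarrow> ('a \<Rightarrow>\<^sub>L 'a)) \<Rightarrow> ('a \<Rightarrow> ('a \<Rightarrow>\<^sub>L ('a \<Rightarrow>\<^sub>L 'y::real_normed_vector)))
     \<Rightarrow> 'a \<Rightarrow> ('y \<Rightarrow>\<^sub>L real) \<Rightarrow> 'w measure \<Rightarrow> 'a \<Rightarrow> real" where
  "lagrangian_hess_form fxx D2G x l M h =
     (LINT \<omega>|M. h \<bullet> blinfun_apply (fxx x \<omega>) h) + blinfun_apply l (blinfun_apply (blinfun_apply (D2G x) h) h)"

definition critical_cone ::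
  "'a::euclidean_space set \<Rightarrow> 'y::real_normed_vector set \<Rightarrow> ('a \<Rightarrow> 'y) \<Rightarrow> ('a \<Rightarrow> ('a \<Rightarrow>\<^sub>L 'y))
     \<Rightarrow> ('a \<Rightarrow> 'w \<Rightarrow> real) \<Rightarrow> ('a \<Rightarrow> 'w \<Rightarrow> 'a) \<Rightarrow> 'a \<Rightarrow> 'a set" where
  "critical_cone A K G DG f fx x = {h \<in> contingent_cone A x.
      blinfun_apply (DG x) h \<in> contingent_cone K (G x) \<and>
      Sup ((\<lambda>\<omega>. fx x \<omega> \<bullet> h) ` active_set f x) \<le> 0}"

end

theory Submission
  imports Defs
begin

(*
  If second-order growth failed at xs, there would be feasible points xs + t_n u_n with
  t_n decreasing to 0 and unit vectors u_n converging to some h, along which the max-function F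
  increases by o(t_n^2) only. A first-order expansion along this sequence shows that h is a
  critical direction, so the hypothesis provides multipliers lambda, alpha with a positive
  Hessian form at h. For them the Lagrangian Phi(x) = int f(x, w) d alpha + <lambda, G x> is
  below F on the feasible set (lambda lies in the polar cone of K), equals F at xs (alpha lives
  on the active set and <lambda, G xs> = 0) and is stationary at xs (xs is interior, so the
  first-order condition defining alpha holds in both directions +v and -v). A second-order
  Taylor expansion of Phi, uniform in w by compactness of W, then contradicts the slow growth
  of F along the sequence.
*)

section \<open>Tangent directions\<close>

lemma contingent_cone_interior:
  fixes A :: "'a::real_normed_vector set"
  assumes "x \<in> interior A"
  shows "contingent_cone A x = UNIV"
proof -
  obtain r where r: "r > 0" "ball x r \<subseteq> A"
    using assms by (meson mem_interior)
  have "h \<in> contingent_cone A x" for h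
  proof -
    define s where "s = r / (norm h + 1)"
    define t where "t = (\<lambda>n. s / real (Suc n))"
    have "norm h + 1 > 0"
      by (simp add: add_nonneg_pos)
    then have "s > 0" "s * norm h < r"
      using r by (simp_all add: s_def divide_less_eq)
    have t_pos: "t n > 0" for n
      using \<open>s > 0\<close> by (simp add: t_def)
    have "decseq t"
      using \<open>s > 0\<close> by (intro decseq_SucI) (simp add: t_def frac_le)
    have "t \<longlonglongrightarrow> 0"
      unfolding t_def by (rule LIMSEQ_Suc[OF lim_const_over_n])
    have "x + t n *\<^sub>R h \<in> A" for n
    proof -
      have "norm (t n *\<^sub>R h) \<le> s * norm h"
        using t_pos[of n] \<open>s > 0\<close> by (simp add: t_def field_simps mult_left_mono)
      then show ?thesis
        using r(2) \<open>s * norm h < r\<close> by (auto simp: dist_norm)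
    qed
    then show ?thesis
      unfolding contingent_cone_def using t_pos \<open>decseq t\<close> \<open>t \<longlonglongrightarrow> 0\<close>
      by (intro CollectI exI[of _ t] exI[of _ "\<lambda>n. h"]) auto
  qed
  then show ?thesis by blast
qed

lemma has_derivative_remainder_sequentially:
  assumes g: "(g has_derivative g') (at x)"
    and t: "\<And>n. t n > 0" "t \<longlonglongrightarrow> 0" and u: "u \<longlonglongrightarrow> h"
  shows "(\<lambda>n. (g (x + t n *\<^sub>R u n) - g x - g' (t n *\<^sub>R u n)) /\<^sub>R t n) \<longlonglongrightarrow> 0"
proof (rule LIMSEQ_I)
  fix e :: real assume "e > 0"
  obtain B where B: "\<And>n. norm (u n) \<le> B"
    using convergent_imp_bounded[of u] u by (auto simp: convergent_def bounded_iff)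
  have "B + 1 > 0"
    using B[of 0] norm_ge_zero[of "u 0"] by linarith
  then have "e / (B + 1) > 0"
    using \<open>e > 0\<close> by simp
  then obtain d where d: "d > 0"
    "\<And>y. norm (y - x) < d \<Longrightarrow> norm (g y - g x - g' (y - x)) \<le> e / (B + 1) * norm (y - x)"
    using g unfolding has_derivative_at_alt by blast
  have "(\<lambda>n. t n *\<^sub>R u n) \<longlonglongrightarrow> 0 *\<^sub>R h"
    using t(2) u by (intro tendsto_intros)
  then obtain n0 where n0: "\<And>n. n \<ge> n0 \<Longrightarrow> norm (t n *\<^sub>R u n) < d"
    using LIMSEQ_D[OF _ d(1)] by fastforce
  have "norm ((g (x + t n *\<^sub>R u n) - g x - g' (t n *\<^sub>R u n)) /\<^sub>R t n - 0) < e" if "n \<ge> n0" for n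
  proof -
    have "norm (g (x + t n *\<^sub>R u n) - g x - g' (t n *\<^sub>R u n)) \<le> e / (B + 1) * (t n * norm (u n))"
      using d(2)[of "x + t n *\<^sub>R u n"] n0[OF that] t(1)[of n] by simp
    also have "\<dots> < e / (B + 1) * (t n * (B + 1))"
      using B[of n] t(1)[of n] \<open>e / (B + 1) > 0\<close> by (intro mult_strict_left_mono) auto
    also have "\<dots> = e * t n"
      using \<open>B + 1 > 0\<close> by simp
    finally show ?thesis
      using t(1)[of n] by (simp add: inverse_eq_divide pos_divide_less_eq)
  qed
  then show "\<exists>n0. \<forall>n\<ge>n0. norm ((g (x + t n *\<^sub>R u n) - g x - g' (t n *\<^sub>R u n)) /\<^sub>R t n - 0) < e"
    by blast
qed

lemma has_derivative_difference_quotient_sequentially: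
  assumes g: "(g has_derivative g') (at x)"
    and t: "\<And>n. t n > 0" "t \<longlonglongrightarrow> 0" and u: "u \<longlonglongrightarrow> h"
  shows "(\<lambda>n. (g (x + t n *\<^sub>R u n) - g x) /\<^sub>R t n) \<longlonglongrightarrow> g' h"
proof -
  have lin: "bounded_linear g'"
    using g by (rule has_derivative_bounded_linear)
  have "(\<lambda>n. (g (x + t n *\<^sub>R u n) - g x - g' (t n *\<^sub>R u n)) /\<^sub>R t n + g' (u n)) \<longlonglongrightarrow> 0 + g' h"
    using has_derivative_remainder_sequentially[OF g t u] u by (intro tendsto_add bounded_linear.tendsto[OF lin])
  moreover have "(g (x + t n *\<^sub>R u n) - g x - g' (t n *\<^sub>R u n)) /\<^sub>R t n + g' (u n)
      = (g (x + t n *\<^sub>R u n) - g x) /\<^sub>R t n" for n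
    using t(1)[of n] by (simp add: linear_cmul[OF bounded_linear.linear[OF lin]] scaleR_diff_right)
  ultimately show ?thesis
    by simp
qed

lemma has_derivative_in_contingent_cone:
  assumes g: "(g has_derivative g') (at x)"
    and t: "\<And>n. t n > 0" "decseq t" "t \<longlonglongrightarrow> 0" and u: "u \<longlonglongrightarrow> h"
    and K: "\<And>n. g (x + t n *\<^sub>R u n) \<in> K"
  shows "g' h \<in> contingent_cone K (g x)"
proof -
  define q where "q = (\<lambda>n. (g (x + t n *\<^sub>R u n) - g x) /\<^sub>R t n)"
  have "q \<longlonglongrightarrow> g' h"
    unfolding q_def using g t(1,3) u by (rule has_derivative_difference_quotient_sequentially)
  moreover have "g x + t n *\<^sub>R q n \<in> K" for n
    using K[of n] t(1)[of n] by (simp add: q_def)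
  ultimately show ?thesis
    unfolding contingent_cone_def using t by blast
qed

lemma decseq_of_monoseq_tendsto_zero:
  fixes T :: "nat \<Rightarrow> real"
  assumes "T \<longlonglongrightarrow> 0" "monoseq T" "T 0 > 0"
  shows "decseq T"
proof -
  have "\<not> incseq T"
    using LIMSEQ_le_const[OF assms(1), of "T 0"] assms(3) by (auto simp: incseq_def)
  then show ?thesis
    using assms(2) by (simp add: monoseq_iff)
qed

lemma convergent_direction_subseq:
  fixes X :: "nat \<Rightarrow> 'a::euclidean_space"
  assumes X: "X \<longlonglongrightarrow> x" "\<And>n. X n \<noteq> x"
  obtains r h where "strict_mono r" "norm h = 1" "decseq (\<lambda>n. norm (X (r n) - x))"
    "(\<lambda>n. sgn (X (r n) - x)) \<longlonglongrightarrow> h"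
proof -
  have "\<forall>n. sgn (X n - x) \<in> sphere 0 1"
    using X(2) by (simp add: norm_sgn)
  then obtain h r1 where h: "h \<in> sphere 0 1" "strict_mono r1"
    "((\<lambda>n. sgn (X n - x)) \<circ> r1) \<longlonglongrightarrow> h"
    by (rule seq_compactE[OF compact_imp_seq_compact[OF compact_sphere]])
  obtain r2 where r2: "strict_mono r2" "monoseq (\<lambda>n. norm (X (r1 (r2 n)) - x))"
    using seq_monosub[of "\<lambda>n. norm (X (r1 n) - x)"] by blast
  define T where "T = (\<lambda>n. norm (X (r1 (r2 n)) - x))"
  have "T \<longlonglongrightarrow> 0"
  proof -
    have "(\<lambda>n. X (r1 (r2 n))) \<longlonglongrightarrow> x"
      using LIMSEQ_subseq_LIMSEQ[OF X(1) strict_mono_o[OF h(2) r2(1)]] by (simp add: o_def)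
    then show ?thesis
      unfolding T_def by (intro tendsto_norm_zero LIM_zero)
  qed
  moreover have "monoseq T" "T 0 > 0"
    using r2(2) X(2) by (simp_all add: T_def)
  ultimately have "decseq T"
    by (rule decseq_of_monoseq_tendsto_zero)
  show ?thesis
  proof (rule that[of "r1 \<circ> r2" h])
    show "strict_mono (r1 \<circ> r2)"
      using h(2) r2(1) by (rule strict_mono_o)
    show "norm h = 1"
      using h(1) by simp
    show "decseq (\<lambda>n. norm (X ((r1 \<circ> r2) n) - x))"
      using \<open>decseq T\<close> by (simp add: T_def o_def)
    show "(\<lambda>n. sgn (X ((r1 \<circ> r2) n) - x)) \<longlonglongrightarrow> h"
      using LIMSEQ_subseq_LIMSEQ[OF h(3) r2(1)] by (simp add: o_def)
  qed
qed

lemma not_quadratic_growth_imp_sequence: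
  fixes F :: "'a::euclidean_space \<Rightarrow> real"
  assumes "\<not> (\<exists>\<rho> > 0. \<exists>U. open U \<and> x \<in> U \<and> (\<forall>y \<in> U \<inter> S. F y \<ge> F x + \<rho> * (norm (y - x))\<^sup>2))"
  obtains t u h e where "\<And>n. t n > 0" "decseq t" "t \<longlonglongrightarrow> 0" "u \<longlonglongrightarrow> h" "norm h = 1"
    "e \<longlonglongrightarrow> 0" "\<And>n. x + t n *\<^sub>R u n \<in> S" "\<And>n. F (x + t n *\<^sub>R u n) \<le> F x + e n * (t n)\<^sup>2"
proof -
  define \<epsilon> where "\<epsilon> = (\<lambda>k. 1 / real (Suc k))"
  have "\<exists>y. y \<in> ball x (\<epsilon> k) \<and> y \<in> S \<and> F y < F x + \<epsilon> k * (norm (y - x))\<^sup>2" for k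
  proof -
    have "\<epsilon> k > 0"
      by (simp add: \<epsilon>_def)
    then have "\<not> (\<forall>y \<in> ball x (\<epsilon> k) \<inter> S. F y \<ge> F x + \<epsilon> k * (norm (y - x))\<^sup>2)"
      using assms by (meson centre_in_ball open_ball)
    then show ?thesis
      by (auto simp: not_le)
  qed
  then obtain X where X: "\<And>k. X k \<in> ball x (\<epsilon> k)" "\<And>k. X k \<in> S"
    "\<And>k. F (X k) < F x + \<epsilon> k * (norm (X k - x))\<^sup>2"
    by metis
  have "\<epsilon> \<longlonglongrightarrow> 0"
    unfolding \<epsilon>_def by (rule LIMSEQ_Suc[OF lim_const_over_n])
  have X_ne: "X k \<noteq> x" for k
    using X(3)[of k] by auto
  have "X \<longlonglongrightarrow> x"
  proof (rule Lim_null_comparison[where f = "\<lambda>k. X k - x", THEN LIM_zero_cancel])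
    show "\<forall>\<^sub>F k in sequentially. norm (X k - x) \<le> \<epsilon> k"
      using X(1) by (auto simp: dist_norm norm_minus_commute less_imp_le)
  qed fact
  then obtain r h where r: "strict_mono r" "norm h = 1" "decseq (\<lambda>n. norm (X (r n) - x))"
    "(\<lambda>n. sgn (X (r n) - x)) \<longlonglongrightarrow> h"
    using X_ne by (rule convergent_direction_subseq)
  show ?thesis
  proof (rule that[of "\<lambda>n. norm (X (r n) - x)" "\<lambda>n. sgn (X (r n) - x)" h "\<lambda>n. \<epsilon> (r n)"])
    show "(\<lambda>n. norm (X (r n) - x)) \<longlonglongrightarrow> 0"
      using LIMSEQ_subseq_LIMSEQ[OF \<open>X \<longlonglongrightarrow> x\<close> r(1)] unfolding o_def by (intro tendsto_norm_zero LIM_zero)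
    show "(\<lambda>n. \<epsilon> (r n)) \<longlonglongrightarrow> 0"
      using LIMSEQ_subseq_LIMSEQ[OF \<open>\<epsilon> \<longlonglongrightarrow> 0\<close> r(1)] by (simp add: o_def)
    have "x + norm (X (r n) - x) *\<^sub>R sgn (X (r n) - x) = X (r n)" for n
      using X_ne[of "r n"] by (simp add: sgn_div_norm)
    then show "x + norm (X (r n) - x) *\<^sub>R sgn (X (r n) - x) \<in> S"
      "F (x + norm (X (r n) - x) *\<^sub>R sgn (X (r n) - x)) \<le> F x + \<epsilon> (r n) * (norm (X (r n) - x))\<^sup>2" for n
      using X(2,3)[of "r n"] by simp_all
  qed (use r X_ne in \<open>simp_all add: o_def\<close>)
qed

section \<open>Second-order Taylor bounds\<close>

lemma Taylor_second_order_lower_bound_real: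
  fixes p q w :: "real \<Rightarrow> real"
  assumes "\<And>s. 0 \<le> s \<Longrightarrow> s \<le> 1 \<Longrightarrow> (p has_real_derivative q s) (at s)"
    and "\<And>s. 0 \<le> s \<Longrightarrow> s \<le> 1 \<Longrightarrow> (q has_real_derivative w s) (at s)"
    and "\<And>s. 0 \<le> s \<Longrightarrow> s \<le> 1 \<Longrightarrow> \<bar>w s - w 0\<bar> \<le> E"
  shows "p 1 \<ge> p 0 + q 0 + w 0 / 2 - E / 2"
proof -
  define D where "D = (\<lambda>m::nat. if m = 0 then p else if m = 1 then q else w)"
  have "\<exists>s. 0 < s \<and> s < 1 \<and> p 1 = (\<Sum>m<2. D m 0 / fact m * (1 - 0) ^ m) + D 2 s / fact 2 * (1 - 0) ^ 2"
    using Taylor[where f = p and diff = D and n = 2 and a = 0 and b = 1 and c = 0 and x = 1]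
    using assms(1,2) by (simp add: D_def less_2_cases_iff)
  then obtain s where "0 < s" "s < 1" "p 1 = p 0 + q 0 + w s / 2"
    by (auto simp: D_def eval_nat_numeral)
  with assms(3)[of s] show ?thesis
    by simp
qed

lemma Taylor_second_order_lower_bound:
  fixes g :: "'a::real_normed_vector \<Rightarrow> real" and g' g'' :: "'a \<Rightarrow> 'a \<Rightarrow> real"
  assumes v: "norm v < r"
    and g': "\<And>y. y \<in> ball x r \<Longrightarrow> (g has_derivative g' y) (at y)"
    and g'': "\<And>y. y \<in> ball x r \<Longrightarrow> ((\<lambda>z. g' z v) has_derivative g'' y) (at y)"
    and E: "\<And>y. y \<in> ball x r \<Longrightarrow> \<bar>g'' y v - g'' x v\<bar> \<le> E"
  shows "g (x + v) \<ge> g x + g' x v + g'' x v / 2 - E / 2"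
proof -
  have segment: "x + s *\<^sub>R v \<in> ball x r" if "0 \<le> s" "s \<le> 1" for s
    using that v mult_left_le_one_le[of "norm v" s] by (simp add: dist_norm)
  have line: "((\<lambda>s. x + s *\<^sub>R v) has_derivative (\<lambda>s. s *\<^sub>R v)) (at s)" for s
    by (auto intro!: derivative_eq_intros)
  have along_line: "((\<lambda>s. k (x + s *\<^sub>R v)) has_real_derivative k' (x + s *\<^sub>R v) v) (at s)"
    if "0 \<le> s" "s \<le> 1" "\<And>y. y \<in> ball x r \<Longrightarrow> (k has_derivative k' y) (at y)"
    for s and k :: "'a \<Rightarrow> real" and k'
  proof -
    have k': "(k has_derivative k' (x + s *\<^sub>R v)) (at (x + s *\<^sub>R v))"
      using that segment by blast
    have "k' (x + s *\<^sub>R v) (t *\<^sub>R v) = t * k' (x + s *\<^sub>R v) v" for t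
      using linear_cmul[OF has_derivative_linear[OF k']] by simp
    then show ?thesis
      using has_derivative_compose[OF line k'] by (simp add: has_field_derivative_def mult_commute_abs)
  qed
  have "g (x + 1 *\<^sub>R v) \<ge> g (x + 0 *\<^sub>R v) + g' (x + 0 *\<^sub>R v) v + g'' (x + 0 *\<^sub>R v) v / 2 - E / 2"
    by (rule Taylor_second_order_lower_bound_real)
      (use along_line[of _ g g'] along_line[of _ "\<lambda>z. g' z v" g''] g' g'' E segment in auto)
  then show ?thesis
    by simp
qed

section \<open>Functions and measures on a compact index space\<close>

lemma continuous_on_slice:
  assumes "continuous_on (S \<times> UNIV) (\<lambda>(x, \<omega>). g x \<omega>)" "x \<in> S"
  shows "continuous_on UNIV (g x)"
proof -
  have "continuous_on UNIV (\<lambda>\<omega>. (x, \<omega>))"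
    by (intro continuous_intros)
  moreover have "(\<lambda>\<omega>. (x, \<omega>)) ` UNIV \<subseteq> S \<times> UNIV"
    using assms(2) by auto
  ultimately show ?thesis
    by (rule continuous_on_compose2[OF assms(1), of UNIV "Pair x", simplified])
qed

lemma uniformly_continuous_in_compact_factor:
  fixes g :: "'a::metric_space \<Rightarrow> 'w::topological_space \<Rightarrow> 'b::metric_space"
  assumes W: "compact (UNIV :: 'w set)"
    and g: "continuous_on (N \<times> UNIV) (\<lambda>(y, \<omega>). g y \<omega>)"
    and N: "open N" "x \<in> N" and "e > 0"
  obtains d where "d > 0" "ball x d \<subseteq> N" "\<And>y \<omega>. y \<in> ball x d \<Longrightarrow> dist (g y \<omega>) (g x \<omega>) < e"
proof -
  define \<phi> where "\<phi> = (\<lambda>p. dist (g (fst p) (snd p)) (g x (snd p)))"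
  have "continuous_on (N \<times> UNIV) (snd :: 'a \<times> 'w \<Rightarrow> 'w)"
    by (intro continuous_intros)
  then have "continuous_on (N \<times> UNIV) (\<lambda>p. g x (snd p))"
    using continuous_on_compose2[OF continuous_on_slice[OF g N(2)]] by blast
  then have "continuous_on (N \<times> UNIV) \<phi>"
    unfolding \<phi>_def using g by (intro continuous_intros) (simp_all add: case_prod_unfold)
  then have "open (\<phi> -` {..<e} \<inter> N \<times> UNIV)"
    by (rule continuous_on_open_vimage[OF open_Times[OF N(1) open_UNIV], THEN iffD1, rule_format])
      (use open_lessThan in auto)
  moreover have "{x} \<times> UNIV \<subseteq> \<phi> -` {..<e} \<inter> N \<times> UNIV"
    using N(2) \<open>e > 0\<close> unfolding \<phi>_def by auto
  ultimately have "\<exists>X. x \<in> X \<and> open X \<and> X \<times> UNIV \<subseteq> \<phi> -` {..<e} \<inter> N \<times> UNIV"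
    by (rule Elementary_Topology.tube_lemma[OF W])
  then obtain X where X: "x \<in> X" "open X" "X \<times> UNIV \<subseteq> \<phi> -` {..<e} \<inter> N \<times> UNIV"
    by blast
  then obtain d where "d > 0" "ball x d \<subseteq> X"
    by (meson openE)
  show ?thesis
  proof (rule that[of d])
    show "ball x d \<subseteq> N"
      using \<open>ball x d \<subseteq> X\<close> X(3) by blast
    show "dist (g y \<omega>) (g x \<omega>) < e" if "y \<in> ball x d" for y \<omega>
    proof -
      have "(y, \<omega>) \<in> X \<times> UNIV"
        using that \<open>ball x d \<subseteq> X\<close> by auto
      then have "\<phi> (y, \<omega>) < e"
        using X(3) by blast
      then show ?thesis
        by (simp add: \<phi>_def)
    qed
  qed fact
qed

lemma integrable_continuous_compact:
  fixes g :: "'w::topological_space \<Rightarrow> 'b::{banach,second_countable_topology}"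
  assumes "compact (UNIV :: 'w set)" "continuous_on UNIV g" "finite_measure M" "sets M = sets borel"
  shows "integrable M g"
proof -
  interpret finite_measure M
    by fact
  obtain B where "\<And>\<omega>. norm (g \<omega>) \<le> B"
    using compact_imp_bounded[OF compact_continuous_image[OF assms(2,1)]]
    unfolding bounded_iff by blast
  moreover have "g \<in> borel_measurable M"
    using borel_measurable_continuous_onI[OF assms(2)] measurable_cong_sets[OF assms(4) refl]
    by blast
  ultimately show ?thesis
    by (intro integrable_const_bound[where B = B]) auto
qed

lemma emeasure_compact_outside_support:
  fixes M :: "'w::topological_space measure"
  assumes sets: "sets M = sets borel" and C: "compact C" "C \<inter> measure_support M = {}"
  shows "emeasure M C = 0"
proof -
  have "\<forall>\<omega>\<in>C. \<exists>V. open V \<and> \<omega> \<in> V \<and> emeasure M V = 0"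
  proof
    fix \<omega> assume "\<omega> \<in> C"
    then obtain V where "open V" "\<omega> \<in> V" "\<not> emeasure M V > 0"
      using C(2) unfolding measure_support_def by blast
    then show "\<exists>V. open V \<and> \<omega> \<in> V \<and> emeasure M V = 0"
      by (intro exI[of _ V]) auto
  qed
  then obtain V where V: "\<And>\<omega>. \<omega> \<in> C \<Longrightarrow> open (V \<omega>) \<and> \<omega> \<in> V \<omega> \<and> emeasure M (V \<omega>) = 0"
    by metis
  obtain C' where C': "C' \<subseteq> C" "finite C'" "C \<subseteq> (\<Union>\<omega>\<in>C'. V \<omega>)"
    using compactE_image[OF C(1), of C V] V by blast
  have "open (\<Union>\<omega>\<in>C'. V \<omega>)"
    using C' V by (intro open_UN) auto
  then have "emeasure M C \<le> emeasure M (\<Union>\<omega>\<in>C'. V \<omega>)"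
    using C' V sets by (intro emeasure_mono) auto
  also have "\<dots> \<le> (\<Sum>\<omega>\<in>C'. emeasure M (V \<omega>))"
    using C' V sets by (intro emeasure_subadditive_finite) auto
  also have "\<dots> = 0"
    using C' V by (intro sum.neutral) auto
  finally show ?thesis
    by simp
qed

lemma emeasure_open_outside_support:
  fixes M :: "'w::topological_space measure"
  assumes M: "regular_borel_measure M" and U: "open U" "U \<inter> measure_support M = {}"
  shows "emeasure M U = 0"
proof -
  have sets: "sets M = sets borel"
    using M by (simp add: regular_borel_measure_def)
  then have "U \<in> sets M"
    using U(1) by simp
  then have "emeasure M U = (SUP C\<in>{C. compact C \<and> C \<subseteq> U}. emeasure M C)"
    using M unfolding regular_borel_measure_def by blast
  also have "\<dots> \<le> 0"
    using U(2) by (intro SUP_least) (auto intro: emeasure_compact_outside_support[OF sets])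
  finally show ?thesis
    by simp
qed

lemma AE_in_closed_superset_of_support:
  fixes M :: "'w::topological_space measure"
  assumes M: "regular_borel_measure M" and "closed C" "measure_support M \<subseteq> C"
  shows "AE \<omega> in M. \<omega> \<in> C"
proof (rule AE_I')
  have "sets M = sets borel"
    using M by (simp add: regular_borel_measure_def)
  moreover have "emeasure M (- C) = 0"
    using assms by (intro emeasure_open_outside_support) auto
  ultimately show "- C \<in> null_sets M"
    using \<open>closed C\<close> by (auto intro: null_setsI)
qed auto

section \<open>Quadratic forms\<close>

lemma abs_inner_blinfun_le:
  fixes A :: "'a::real_inner \<Rightarrow>\<^sub>L 'a"
  shows "\<bar>c \<bullet> A d\<bar> \<le> norm A * norm c * norm d"
proof -
  have "\<bar>c \<bullet> A d\<bar> \<le> norm c * norm (A d)"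
    by (rule Cauchy_Schwarz_ineq2)
  also have "\<dots> \<le> norm c * (norm A * norm d)"
    by (intro mult_left_mono norm_blinfun) simp
  finally show ?thesis
    by (simp add: ac_simps)
qed

lemma abs_blinfun_bilinear_le:
  fixes D :: "'a::real_normed_vector \<Rightarrow>\<^sub>L 'b::real_normed_vector \<Rightarrow>\<^sub>L 'y::real_normed_vector"
    and l :: "'y \<Rightarrow>\<^sub>L real"
  shows "\<bar>l (D c d)\<bar> \<le> norm l * norm D * norm c * norm d"
proof -
  have "\<bar>l (D c d)\<bar> \<le> norm l * norm (D c d)"
    using norm_blinfun[of l "D c d"] by simp
  also have "\<dots> \<le> norm l * (norm (D c) * norm d)"
    by (intro mult_left_mono norm_blinfun) simp
  also have "\<dots> \<le> norm l * (norm D * norm c * norm d)"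
    by (intro mult_left_mono mult_right_mono norm_blinfun) simp_all
  finally show ?thesis
    by (simp add: ac_simps)
qed

lemma inner_blinfun_quadratic_diff_le:
  fixes A :: "'a::real_inner \<Rightarrow>\<^sub>L 'a"
  shows "\<bar>a \<bullet> A a - b \<bullet> A b\<bar> \<le> norm A * norm (a - b) * (norm a + norm b)"
proof -
  have "a \<bullet> A a - b \<bullet> A b = (a - b) \<bullet> A a + b \<bullet> A (a - b)"
    by (simp add: inner_diff_left inner_diff_right blinfun.diff_right)
  moreover have "norm A * norm (a - b) * norm a + norm A * norm b * norm (a - b)
      = norm A * norm (a - b) * (norm a + norm b)"
    by (simp add: algebra_simps)
  ultimately show ?thesis
    using abs_inner_blinfun_le[of "a - b" A a] abs_inner_blinfun_le[of b A "a - b"]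
      abs_triangle_ineq[of "(a - b) \<bullet> A a" "b \<bullet> A (a - b)"] by linarith
qed

lemma blinfun_quadratic_diff_le:
  fixes D :: "'a::real_normed_vector \<Rightarrow>\<^sub>L 'a \<Rightarrow>\<^sub>L 'y::real_normed_vector" and l :: "'y \<Rightarrow>\<^sub>L real"
  shows "\<bar>l (D a a) - l (D b b)\<bar> \<le> norm l * norm D * norm (a - b) * (norm a + norm b)"
proof -
  have "l (D a a) - l (D b b) = l (D (a - b) a) + l (D b (a - b))"
    by (simp add: blinfun.diff_left blinfun.diff_right)
  moreover have "norm l * norm D * norm (a - b) * norm a + norm l * norm D * norm b * norm (a - b)
      = norm l * norm D * norm (a - b) * (norm a + norm b)"
    by (simp add: algebra_simps)
  ultimately show ?thesis
    using abs_blinfun_bilinear_le[of l D "a - b" a] abs_blinfun_bilinear_le[of l D b "a - b"]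
      abs_triangle_ineq[of "l (D (a - b) a)" "l (D b (a - b))"] by linarith
qed

lemma nonpos_of_le_pos_multiples:
  fixes q c :: real
  assumes "\<And>\<epsilon>. \<epsilon> > 0 \<Longrightarrow> q \<le> \<epsilon> * c"
  shows "q \<le> 0"
proof (rule ccontr)
  assume "\<not> q \<le> 0"
  moreover from this have "c > 0"
    using assms[of 1] by simp
  ultimately show False
    using assms[of "q / (2 * c)"] by simp
qed

lemma tendsto_of_quadratic_bound:
  fixes q :: "'a::real_normed_vector \<Rightarrow> real"
  assumes q: "\<And>a b. \<bar>q a - q b\<bar> \<le> C * norm (a - b) * (norm a + norm b)" and u: "u \<longlonglongrightarrow> h"
  shows "(\<lambda>n. q (u n)) \<longlonglongrightarrow> q h"
proof -
  have "(\<lambda>n. C * norm (u n - h) * (norm (u n) + norm h)) \<longlonglongrightarrow> C * norm (h - h) * (norm h + norm h)"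
    using u by (intro tendsto_intros)
  then have bound: "(\<lambda>n. C * norm (u n - h) * (norm (u n) + norm h)) \<longlonglongrightarrow> 0"
    by simp
  have "\<forall>n. norm (q (u n) - q h) \<le> C * norm (u n - h) * (norm (u n) + norm h)"
    using q by simp
  then have "(\<lambda>n. q (u n) - q h) \<longlonglongrightarrow> 0"
    by (intro Lim_null_comparison[OF always_eventually bound])
  then show ?thesis
    by (rule LIM_zero_cancel)
qed

lemma lagrangian_hess_form_scaleR:
  "lagrangian_hess_form fxx D2G x l M (c *\<^sub>R v) = c\<^sup>2 * lagrangian_hess_form fxx D2G x l M v"
  by (simp add: lagrangian_hess_form_def blinfun.scaleR_right blinfun.scaleR_left
      power2_eq_square algebra_simps)

section \<open>The minimax problem\<close>

locale maxfun_problem =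
  fixes f :: "'a::euclidean_space \<Rightarrow> 'w::topological_space \<Rightarrow> real"
    and fx :: "'a \<Rightarrow> 'w \<Rightarrow> 'a"
    and fxx :: "'a \<Rightarrow> 'w \<Rightarrow> ('a \<Rightarrow>\<^sub>L 'a)"
    and G :: "'a \<Rightarrow> 'y::real_normed_vector"
    and DG :: "'a \<Rightarrow> ('a \<Rightarrow>\<^sub>L 'y)"
    and D2G :: "'a \<Rightarrow> ('a \<Rightarrow>\<^sub>L ('a \<Rightarrow>\<^sub>L 'y))"
    and N :: "'a set"
    and xs :: 'a
  assumes compact_W: "compact (UNIV :: 'w set)"
    and f_deriv: "\<And>x \<omega>. ((\<lambda>y. f y \<omega>) has_derivative (\<lambda>h. fx x \<omega> \<bullet> h)) (at x)"
    and f_cont: "continuous_on UNIV (\<lambda>(x, \<omega>). f x \<omega>)"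
    and fx_cont: "continuous_on UNIV (\<lambda>(x, \<omega>). fx x \<omega>)"
    and G_deriv: "\<And>x. (G has_derivative blinfun_apply (DG x)) (at x)"
    and N: "open N" "xs \<in> N"
    and f_deriv2: "\<And>x \<omega>. x \<in> N \<Longrightarrow> ((\<lambda>y. fx y \<omega>) has_derivative blinfun_apply (fxx x \<omega>)) (at x)"
    and fxx_cont: "continuous_on (N \<times> UNIV) (\<lambda>(x, \<omega>). fxx x \<omega>)"
    and G_deriv2: "\<And>x. x \<in> N \<Longrightarrow> (DG has_derivative blinfun_apply (D2G x)) (at x)"
    and D2G_cont: "continuous_on N D2G"
begin

lemma continuous_on_f: "continuous_on UNIV (f x)"
  using f_cont by (intro continuous_on_slice[of UNIV]) simp_all

lemma continuous_on_fx: "continuous_on UNIV (fx x)"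
  using fx_cont by (intro continuous_on_slice[of UNIV]) simp_all

lemma continuous_on_fxx: "continuous_on UNIV (fxx xs)"
  using fxx_cont N(2) by (rule continuous_on_slice)

lemma maxfun_upper: "f x \<omega> \<le> maxfun f x"
proof -
  have "bdd_above (range (f x))"
    using compact_continuous_image[OF continuous_on_f compact_W]
    by (intro bounded_imp_bdd_above compact_imp_bounded)
  then show ?thesis
    unfolding maxfun_def by (intro cSup_upper) auto
qed

lemma active_set_nonempty: "active_set f x \<noteq> {}"
proof -
  have "\<exists>s \<in> range (f x). \<forall>t \<in> range (f x). t \<le> s"
    by (rule compact_attains_sup[OF compact_continuous_image[OF continuous_on_f compact_W]]) simp
  then obtain s where s: "s \<in> range (f x)" "\<And>t. t \<in> range (f x) \<Longrightarrow> t \<le> s"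
    by blast
  then have "maxfun f x = s"
    unfolding maxfun_def by (intro cSup_eq_maximum) auto
  then show ?thesis
    using s(1) by (auto simp: active_set_def)
qed

lemma closed_active_set: "closed (active_set f x)"
  unfolding active_set_def
  using continuous_on_f by (intro closed_Collect_eq) (auto simp: continuous_on_eq_continuous_at)

lemma critical_cone_memberI:
  assumes A: "xs \<in> interior A"
    and t: "\<And>n. t n > 0" "decseq t" "t \<longlonglongrightarrow> 0" and u: "u \<longlonglongrightarrow> h" and e: "e \<longlonglongrightarrow> 0"
    and feasible: "\<And>n. xs + t n *\<^sub>R u n \<in> feasible_set A K G"
    and descent: "\<And>n. maxfun f (xs + t n *\<^sub>R u n) \<le> maxfun f xs + e n * t n"
  shows "h \<in> critical_cone A K G DG f fx xs"
proof -
  have "DG xs h \<in> contingent_cone K (G xs)"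
    using G_deriv t u by (rule has_derivative_in_contingent_cone) (use feasible in \<open>simp add: feasible_set_def\<close>)
  moreover have "Sup ((\<lambda>\<omega>. fx xs \<omega> \<bullet> h) ` active_set f xs) \<le> 0"
  proof (rule cSup_least)
    show "(\<lambda>\<omega>. fx xs \<omega> \<bullet> h) ` active_set f xs \<noteq> {}"
      using active_set_nonempty by blast
  next
    fix y assume "y \<in> (\<lambda>\<omega>. fx xs \<omega> \<bullet> h) ` active_set f xs"
    then obtain \<omega> where \<omega>: "f xs \<omega> = maxfun f xs" "y = fx xs \<omega> \<bullet> h"
      by (auto simp: active_set_def)
    have "(\<lambda>n. (f (xs + t n *\<^sub>R u n) \<omega> - f xs \<omega>) /\<^sub>R t n) \<longlonglongrightarrow> fx xs \<omega> \<bullet> h"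
      using f_deriv t(1,3) u by (rule has_derivative_difference_quotient_sequentially)
    moreover have "(f (xs + t n *\<^sub>R u n) \<omega> - f xs \<omega>) /\<^sub>R t n \<le> e n" for n
    proof -
      have "f (xs + t n *\<^sub>R u n) \<omega> - f xs \<omega> \<le> e n * t n"
        using maxfun_upper[of "xs + t n *\<^sub>R u n" \<omega>] descent[of n] \<omega>(1) by simp
      then show ?thesis
        using t(1)[of n] by (simp add: inverse_eq_divide pos_divide_le_eq)
    qed
    ultimately have "fx xs \<omega> \<bullet> h \<le> 0"
      using e by (intro LIMSEQ_le) auto
    then show "y \<le> 0"
      using \<omega>(2) by simp
  qed
  ultimately show ?thesis
    unfolding critical_cone_def contingent_cone_interior[OF A] by blast
qed

lemma hessians_uniformly_close:
  assumes "\<epsilon> > 0"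
  obtains \<delta> where "\<delta> > 0" "ball xs \<delta> \<subseteq> N"
    "\<And>y \<omega>. y \<in> ball xs \<delta> \<Longrightarrow> norm (fxx y \<omega> - fxx xs \<omega>) \<le> \<epsilon>"
    "\<And>y. y \<in> ball xs \<delta> \<Longrightarrow> norm (D2G y - D2G xs) \<le> \<epsilon>"
proof -
  obtain d1 where d1: "d1 > 0" "ball xs d1 \<subseteq> N"
    "\<And>y \<omega>. y \<in> ball xs d1 \<Longrightarrow> dist (fxx y \<omega>) (fxx xs \<omega>) < \<epsilon>"
    using uniformly_continuous_in_compact_factor[OF compact_W fxx_cont N assms] by blast
  obtain d2 where d2: "d2 > 0" "\<And>y. y \<in> N \<Longrightarrow> dist y xs < d2 \<Longrightarrow> dist (D2G y) (D2G xs) < \<epsilon>"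
    using D2G_cont N(2) assms unfolding continuous_on_iff by blast
  show ?thesis
  proof (rule that[of "min d1 d2"])
    show "min d1 d2 > 0" "ball xs (min d1 d2) \<subseteq> N"
      using d1 d2 by auto
    show "norm (fxx y \<omega> - fxx xs \<omega>) \<le> \<epsilon>" if "y \<in> ball xs (min d1 d2)" for y \<omega>
      using d1(3)[of y \<omega>] that by (simp add: dist_norm)
    show "norm (D2G y - D2G xs) \<le> \<epsilon>" if "y \<in> ball xs (min d1 d2)" for y
      using d1(2) d2(2)[of y] that by (auto simp: dist_norm norm_minus_commute)
  qed
qed

lemma f_second_order_lower_bound:
  assumes \<delta>: "ball xs \<delta> \<subseteq> N" "\<And>y \<omega>. y \<in> ball xs \<delta> \<Longrightarrow> norm (fxx y \<omega> - fxx xs \<omega>) \<le> \<epsilon>"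
    and v: "norm v < \<delta>"
  shows "f xs \<omega> + fx xs \<omega> \<bullet> v + v \<bullet> fxx xs \<omega> v / 2 - \<epsilon> * (norm v)\<^sup>2 / 2 \<le> f (xs + v) \<omega>"
proof -
  have "f xs \<omega> + fx xs \<omega> \<bullet> v + fxx xs \<omega> v \<bullet> v / 2 - \<epsilon> * (norm v)\<^sup>2 / 2 \<le> f (xs + v) \<omega>"
  proof (rule Taylor_second_order_lower_bound[where g = "\<lambda>y. f y \<omega>" and g' = "\<lambda>y w. fx y \<omega> \<bullet> w"
        and g'' = "\<lambda>y w. fxx y \<omega> w \<bullet> v", OF v])
    fix y assume y: "y \<in> ball xs \<delta>"
    show "((\<lambda>y. f y \<omega>) has_derivative (\<lambda>w. fx y \<omega> \<bullet> w)) (at y)"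
      by (rule f_deriv)
    show "((\<lambda>z. fx z \<omega> \<bullet> v) has_derivative (\<lambda>w. fxx y \<omega> w \<bullet> v)) (at y)"
      using y \<delta>(1) by (intro has_derivative_inner_left f_deriv2) auto
    have "\<bar>fxx y \<omega> v \<bullet> v - fxx xs \<omega> v \<bullet> v\<bar> = \<bar>v \<bullet> (fxx y \<omega> - fxx xs \<omega>) v\<bar>"
      by (simp add: blinfun.diff_left inner_diff_right inner_commute)
    also have "\<dots> \<le> norm (fxx y \<omega> - fxx xs \<omega>) * norm v * norm v"
      by (rule abs_inner_blinfun_le)
    also have "\<dots> \<le> \<epsilon> * norm v * norm v"
      using \<delta>(2)[OF y] by (intro mult_right_mono) auto
    also have "\<dots> = \<epsilon> * (norm v)\<^sup>2"
      by (simp add: power2_eq_square)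
    finally show "\<bar>fxx y \<omega> v \<bullet> v - fxx xs \<omega> v \<bullet> v\<bar> \<le> \<epsilon> * (norm v)\<^sup>2" .
  qed
  then show ?thesis
    by (simp add: inner_commute)
qed

lemma functional_G_second_order_lower_bound:
  fixes l :: "'y \<Rightarrow>\<^sub>L real"
  assumes \<delta>: "ball xs \<delta> \<subseteq> N" "\<And>y. y \<in> ball xs \<delta> \<Longrightarrow> norm (D2G y - D2G xs) \<le> \<epsilon>"
    and v: "norm v < \<delta>"
  shows "l (G xs) + l (DG xs v) + l (D2G xs v v) / 2 - norm l * \<epsilon> * (norm v)\<^sup>2 / 2 \<le> l (G (xs + v))"
proof (rule Taylor_second_order_lower_bound[where g = "\<lambda>y. l (G y)" and g' = "\<lambda>y w. l (DG y w)"
      and g'' = "\<lambda>y w. l (D2G y w v)", OF v])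
  fix y assume y: "y \<in> ball xs \<delta>"
  show "((\<lambda>y. l (G y)) has_derivative (\<lambda>w. l (DG y w))) (at y)"
    by (rule bounded_linear.has_derivative[OF blinfun.bounded_linear_right G_deriv])
  have "((\<lambda>z. DG z v) has_derivative (\<lambda>w. D2G y w v)) (at y)"
    using y \<delta>(1) by (intro bounded_linear.has_derivative[OF blinfun.bounded_linear_left G_deriv2]) auto
  then show "((\<lambda>z. l (DG z v)) has_derivative (\<lambda>w. l (D2G y w v))) (at y)"
    by (rule bounded_linear.has_derivative[OF blinfun.bounded_linear_right])
  have "\<bar>l (D2G y v v) - l (D2G xs v v)\<bar> = \<bar>l ((D2G y - D2G xs) v v)\<bar>"
    by (simp add: blinfun.diff_left blinfun.diff_right)
  also have "\<dots> \<le> norm l * norm (D2G y - D2G xs) * norm v * norm v"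
    by (rule abs_blinfun_bilinear_le)
  also have "\<dots> \<le> norm l * (\<epsilon> * norm v * norm v)"
    using \<delta>(2)[OF y] by (simp add: mult.assoc mult_left_mono mult_right_mono)
  also have "\<dots> = norm l * \<epsilon> * (norm v)\<^sup>2"
    by (simp add: power2_eq_square)
  finally show "\<bar>l (D2G y v v) - l (D2G xs v v)\<bar> \<le> norm l * \<epsilon> * (norm v)\<^sup>2" .
qed

end

locale maxfun_multiplier = maxfun_problem f fx fxx G DG D2G N xs
  for f :: "'a::euclidean_space \<Rightarrow> 'w::topological_space \<Rightarrow> real"
    and fx fxx and G :: "'a \<Rightarrow> 'y::real_normed_vector" and DG D2G N xs +
  fixes l :: "'y \<Rightarrow>\<^sub>L real" and M :: "'w measure"
  assumes M_regular: "regular_borel_measure M"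
    and M_prob: "emeasure M (space M) = 1"
    and M_support: "measure_support M \<subseteq> active_set f xs"
    and stationary: "\<And>v. (LINT \<omega>|M. fx xs \<omega>) \<bullet> v + l (DG xs v) = 0"
begin

lemma finite_measure_M: "finite_measure M"
  using M_prob by (intro finite_measureI) simp

lemma measure_space_M [simp]: "measure M (space M) = 1"
  using M_prob by (simp add: measure_def)

lemma integrable_continuous:
  fixes g :: "'w \<Rightarrow> 'b::{banach,second_countable_topology}"
  assumes "continuous_on UNIV g"
  shows "integrable M g"
proof (rule integrable_continuous_compact[OF compact_W assms])
  show "finite_measure M"
    by (rule finite_measure_M)
  show "sets M = sets borel"
    using M_regular by (simp add: regular_borel_measure_def)
qed

lemma integrable_hessian: "integrable M (\<lambda>\<omega>. v \<bullet> fxx xs \<omega> v)"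
  by (intro integrable_continuous continuous_intros blinfun.continuous_on continuous_on_fxx)

lemma integral_f_le_maxfun: "(LINT \<omega>|M. f x \<omega>) \<le> maxfun f x"
proof -
  interpret finite_measure M
    by (rule finite_measure_M)
  have "(LINT \<omega>|M. f x \<omega>) \<le> (LINT \<omega>|M. maxfun f x)"
    using integrable_continuous[OF continuous_on_f] maxfun_upper by (intro integral_mono) auto
  then show ?thesis
    by simp
qed

lemma integral_f_xs_eq_maxfun: "(LINT \<omega>|M. f xs \<omega>) = maxfun f xs"
proof -
  interpret finite_measure M
    by (rule finite_measure_M)
  have "AE \<omega> in M. \<omega> \<in> active_set f xs"
    using M_regular closed_active_set M_support by (rule AE_in_closed_superset_of_support)
  then have "(LINT \<omega>|M. f xs \<omega>) = (LINT \<omega>|M. maxfun f xs)"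
    using integrable_continuous[OF continuous_on_f]
    by (intro integral_cong_AE) (auto simp: active_set_def)
  then show ?thesis
    by simp
qed

lemma integral_hessian_diff_le:
  assumes B: "\<And>\<omega>. norm (fxx xs \<omega>) \<le> B"
  shows "\<bar>(LINT \<omega>|M. a \<bullet> fxx xs \<omega> a) - (LINT \<omega>|M. b \<bullet> fxx xs \<omega> b)\<bar>
    \<le> B * norm (a - b) * (norm a + norm b)"
proof -
  interpret finite_measure M
    by (rule finite_measure_M)
  have "\<bar>(LINT \<omega>|M. a \<bullet> fxx xs \<omega> a) - (LINT \<omega>|M. b \<bullet> fxx xs \<omega> b)\<bar>
      = \<bar>LINT \<omega>|M. a \<bullet> fxx xs \<omega> a - b \<bullet> fxx xs \<omega> b\<bar>"
    using integrable_hessian by simp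
  also have "\<dots> \<le> (LINT \<omega>|M. \<bar>a \<bullet> fxx xs \<omega> a - b \<bullet> fxx xs \<omega> b\<bar>)"
    by (rule integral_abs_bound)
  also have "\<dots> \<le> (LINT \<omega>|M. B * norm (a - b) * (norm a + norm b))"
  proof (rule integral_mono)
    show "integrable M (\<lambda>\<omega>. \<bar>a \<bullet> fxx xs \<omega> a - b \<bullet> fxx xs \<omega> b\<bar>)"
      using integrable_hessian by auto
    fix \<omega>
    have "\<bar>a \<bullet> fxx xs \<omega> a - b \<bullet> fxx xs \<omega> b\<bar> \<le> norm (fxx xs \<omega>) * norm (a - b) * (norm a + norm b)"
      by (rule inner_blinfun_quadratic_diff_le)
    also have "\<dots> \<le> B * norm (a - b) * (norm a + norm b)"
      using B[of \<omega>] by (intro mult_right_mono) auto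
    finally show "\<bar>a \<bullet> fxx xs \<omega> a - b \<bullet> fxx xs \<omega> b\<bar> \<le> B * norm (a - b) * (norm a + norm b)" .
  qed simp
  also have "\<dots> = B * norm (a - b) * (norm a + norm b)"
    by simp
  finally show ?thesis .
qed

lemma hessian_form_diff_le:
  obtains C where "\<And>a b. \<bar>lagrangian_hess_form fxx D2G xs l M a - lagrangian_hess_form fxx D2G xs l M b\<bar>
    \<le> C * norm (a - b) * (norm a + norm b)"
proof -
  obtain B where B: "\<And>\<omega>. norm (fxx xs \<omega>) \<le> B"
    using compact_imp_bounded[OF compact_continuous_image[OF continuous_on_fxx compact_W]]
    unfolding bounded_iff by auto
  show ?thesis
  proof (rule that[of "B + norm l * norm (D2G xs)"])
    fix a b
    show "\<bar>lagrangian_hess_form fxx D2G xs l M a - lagrangian_hess_form fxx D2G xs l M b\<bar>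
      \<le> (B + norm l * norm (D2G xs)) * norm (a - b) * (norm a + norm b)"
      using integral_hessian_diff_le[OF B, of a b] blinfun_quadratic_diff_le[of l "D2G xs" a b]
      unfolding lagrangian_hess_form_def distrib_right abs_le_iff by linarith
  qed
qed

lemma lagrangian_second_order_lower_bound:
  assumes "e > 0"
  obtains \<delta> where "\<delta> > 0" "\<And>v. norm v < \<delta> \<Longrightarrow>
    maxfun f xs + l (G xs) + lagrangian_hess_form fxx D2G xs l M v / 2 - e * (norm v)\<^sup>2
      \<le> (LINT \<omega>|M. f (xs + v) \<omega>) + l (G (xs + v))"
proof -
  interpret finite_measure M
    by (rule finite_measure_M)
  define \<epsilon> where "\<epsilon> = e / (1 + norm l)"
  have "1 + norm l > 0"
    by (simp add: add_pos_nonneg)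
  then have "\<epsilon> > 0" "(1 + norm l) * \<epsilon> = e"
    using assms by (simp_all add: \<epsilon>_def)
  obtain \<delta> where \<delta>: "\<delta> > 0" "ball xs \<delta> \<subseteq> N"
    "\<And>y \<omega>. y \<in> ball xs \<delta> \<Longrightarrow> norm (fxx y \<omega> - fxx xs \<omega>) \<le> \<epsilon>"
    "\<And>y. y \<in> ball xs \<delta> \<Longrightarrow> norm (D2G y - D2G xs) \<le> \<epsilon>"
    using hessians_uniformly_close[OF \<open>\<epsilon> > 0\<close>] by blast
  show ?thesis
  proof (rule that[OF \<delta>(1)])
    fix v :: 'a assume v: "norm v < \<delta>"
    define c where "c = \<epsilon> * (norm v)\<^sup>2 / 2"
    have int_f: "integrable M (f x)" for x
      by (rule integrable_continuous[OF continuous_on_f])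
    have int_fx: "integrable M (fx xs)"
      by (rule integrable_continuous[OF continuous_on_fx])
    have "maxfun f xs + (LINT \<omega>|M. fx xs \<omega>) \<bullet> v + (LINT \<omega>|M. v \<bullet> fxx xs \<omega> v) / 2 - c
        = (LINT \<omega>|M. f xs \<omega> + fx xs \<omega> \<bullet> v + v \<bullet> fxx xs \<omega> v / 2 - c)"
      using int_f int_fx integrable_hessian by (simp add: integral_f_xs_eq_maxfun integrable_inner_left)
    also have "\<dots> \<le> (LINT \<omega>|M. f (xs + v) \<omega>)"
      using f_second_order_lower_bound[OF \<delta>(2,3) v] int_f int_fx integrable_hessian
      by (intro integral_mono) (auto simp: c_def)
    finally have "maxfun f xs + (LINT \<omega>|M. fx xs \<omega>) \<bullet> v + (LINT \<omega>|M. v \<bullet> fxx xs \<omega> v) / 2 - c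
        \<le> (LINT \<omega>|M. f (xs + v) \<omega>)" .
    moreover have "l (G xs) + l (DG xs v) + l (D2G xs v v) / 2 - norm l * \<epsilon> * (norm v)\<^sup>2 / 2
        \<le> l (G (xs + v))"
      by (rule functional_G_second_order_lower_bound[OF \<delta>(2,4) v])
    moreover have "c + norm l * \<epsilon> * (norm v)\<^sup>2 / 2 = e * (norm v)\<^sup>2 / 2"
      unfolding c_def \<open>(1 + norm l) * \<epsilon> = e\<close>[symmetric] by (simp add: algebra_simps)
    moreover have "e * (norm v)\<^sup>2 / 2 \<le> e * (norm v)\<^sup>2"
      using \<open>e > 0\<close> by simp
    ultimately show "maxfun f xs + l (G xs) + lagrangian_hess_form fxx D2G xs l M v / 2 - e * (norm v)\<^sup>2
      \<le> (LINT \<omega>|M. f (xs + v) \<omega>) + l (G (xs + v))"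
      using stationary[of v] unfolding lagrangian_hess_form_def add_divide_distrib by linarith
  qed
qed

lemma tendsto_hessian_form:
  assumes "u \<longlonglongrightarrow> h"
  shows "(\<lambda>n. lagrangian_hess_form fxx D2G xs l M (u n)) \<longlonglongrightarrow> lagrangian_hess_form fxx D2G xs l M h"
proof -
  obtain C where "\<And>a b. \<bar>lagrangian_hess_form fxx D2G xs l M a - lagrangian_hess_form fxx D2G xs l M b\<bar>
    \<le> C * norm (a - b) * (norm a + norm b)"
    using hessian_form_diff_le by blast
  then show ?thesis
    using assms by (rule tendsto_of_quadratic_bound)
qed

lemma hessian_form_le_of_slow_growth:
  assumes t: "\<And>n. t n > 0" "t \<longlonglongrightarrow> 0" and u: "u \<longlonglongrightarrow> h" and e: "e \<longlonglongrightarrow> 0" and "\<epsilon> > 0"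
    and slow: "\<And>n. (LINT \<omega>|M. f (xs + t n *\<^sub>R u n) \<omega>) + l (G (xs + t n *\<^sub>R u n))
      \<le> maxfun f xs + l (G xs) + e n * (t n)\<^sup>2"
  shows "lagrangian_hess_form fxx D2G xs l M h / 2 \<le> \<epsilon> * (norm h)\<^sup>2"
proof -
  define Q where "Q = lagrangian_hess_form fxx D2G xs l M"
  obtain \<delta> where "\<delta> > 0" and \<delta>: "\<And>v. norm v < \<delta> \<Longrightarrow>
    maxfun f xs + l (G xs) + Q v / 2 - \<epsilon> * (norm v)\<^sup>2 \<le> (LINT \<omega>|M. f (xs + v) \<omega>) + l (G (xs + v))"
    unfolding Q_def using lagrangian_second_order_lower_bound[OF \<open>\<epsilon> > 0\<close>] by blast
  have "(\<lambda>n. norm (t n *\<^sub>R u n)) \<longlonglongrightarrow> norm (0 *\<^sub>R h)"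
    using t(2) u by (intro tendsto_intros)
  then have "eventually (\<lambda>n. norm (t n *\<^sub>R u n) < \<delta>) sequentially"
    using \<open>\<delta> > 0\<close> by (intro order_tendstoD(2)) auto
  then have "eventually (\<lambda>n. Q (u n) / 2 - \<epsilon> * (norm (u n))\<^sup>2 \<le> e n) sequentially"
  proof eventually_elim
    case (elim n)
    have "maxfun f xs + l (G xs) + Q (t n *\<^sub>R u n) / 2 - \<epsilon> * (norm (t n *\<^sub>R u n))\<^sup>2
        \<le> maxfun f xs + l (G xs) + e n * (t n)\<^sup>2"
      using \<delta>[OF elim] slow[of n] by linarith
    then have "(t n)\<^sup>2 * (Q (u n) / 2 - \<epsilon> * (norm (u n))\<^sup>2) \<le> (t n)\<^sup>2 * e n"
      unfolding Q_def lagrangian_hess_form_scaleR using t(1)[of n]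
      by (simp add: power_mult_distrib algebra_simps)
    then show ?case
      using t(1)[of n] by simp
  qed
  moreover have "(\<lambda>n. Q (u n) / 2 - \<epsilon> * (norm (u n))\<^sup>2) \<longlonglongrightarrow> Q h / 2 - \<epsilon> * (norm h)\<^sup>2"
    unfolding Q_def using u by (intro tendsto_intros tendsto_hessian_form) auto
  ultimately have "Q h / 2 - \<epsilon> * (norm h)\<^sup>2 \<le> 0"
    using e by (intro LIMSEQ_le) (auto simp: eventually_sequentially)
  then show ?thesis
    by (simp add: Q_def)
qed

end

context maxfun_problem
begin

lemma hessian_form_nonpos:
  assumes A: "xs \<in> interior A" and l: "l \<in> multipliers A K G f xs" and M: "M \<in> alpha_set A DG f fx xs l"
    and t: "\<And>n. t n > 0" "t \<longlonglongrightarrow> 0" and u: "u \<longlonglongrightarrow> h" and e: "e \<longlonglongrightarrow> 0"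
    and feasible: "\<And>n. G (xs + t n *\<^sub>R u n) \<in> K"
    and descent: "\<And>n. maxfun f (xs + t n *\<^sub>R u n) \<le> maxfun f xs + e n * (t n)\<^sup>2"
  shows "lagrangian_hess_form fxx D2G xs l M h \<le> 0"
proof -
  have l_polar: "\<And>y. y \<in> K \<Longrightarrow> l y \<le> 0" and l_G: "l (G xs) = 0"
    using l by (auto simp: multipliers_def polar_cone_def)
  have first_order: "\<And>v. (LINT \<omega>|M. fx xs \<omega>) \<bullet> v + l (DG xs v) \<ge> 0"
    using M by (auto simp: alpha_set_def contingent_cone_interior[OF A])
  interpret maxfun_multiplier f fx fxx G DG D2G N xs l M
  proof
    show "regular_borel_measure M" "emeasure M (space M) = 1" "measure_support M \<subseteq> active_set f xs"
      using M by (auto simp: alpha_set_def)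
    show "(LINT \<omega>|M. fx xs \<omega>) \<bullet> v + l (DG xs v) = 0" for v
      using first_order[of v] first_order[of "- v"] by (simp add: blinfun.minus_right)
  qed
  have "(LINT \<omega>|M. f (xs + t n *\<^sub>R u n) \<omega>) + l (G (xs + t n *\<^sub>R u n))
      \<le> maxfun f xs + l (G xs) + e n * (t n)\<^sup>2" for n
    using integral_f_le_maxfun[of "xs + t n *\<^sub>R u n"] l_polar[OF feasible[of n]] descent[of n] l_G
    by linarith
  then have "lagrangian_hess_form fxx D2G xs l M h / 2 \<le> \<epsilon> * (norm h)\<^sup>2" if "\<epsilon> > 0" for \<epsilon>
    by (rule hessian_form_le_of_slow_growth[OF t u e that])
  then have "lagrangian_hess_form fxx D2G xs l M h \<le> \<epsilon> * (2 * (norm h)\<^sup>2)" if "\<epsilon> > 0" for \<epsilon>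
    using that by fastforce
  then show ?thesis
    by (rule nonpos_of_le_pos_multiples)
qed

lemma second_order_growth:
  assumes xs_int: "xs \<in> interior A"
    and SOSC: "\<And>h. h \<in> critical_cone A K G DG f fx xs - {0} \<Longrightarrow>
      \<exists>l \<in> multipliers A K G f xs. \<exists>M \<in> alpha_set A DG f fx xs l.
        lagrangian_hess_form fxx D2G xs l M h > 0"
  shows "\<exists>\<rho> > 0. \<exists>U. open U \<and> xs \<in> U \<and>
    (\<forall>x \<in> U \<inter> feasible_set A K G. maxfun f x \<ge> maxfun f xs + \<rho> * (norm (x - xs))\<^sup>2)"
proof (rule ccontr)
  assume "\<not> ?thesis"
  then obtain t u h e where t: "\<And>n. t n > 0" "decseq t" "t \<longlonglongrightarrow> 0"
    and u: "u \<longlonglongrightarrow> h" "norm h = 1" and e: "e \<longlonglongrightarrow> 0"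
    and feasible: "\<And>n. xs + t n *\<^sub>R u n \<in> feasible_set A K G"
    and descent: "\<And>n. maxfun f (xs + t n *\<^sub>R u n) \<le> maxfun f xs + e n * (t n)\<^sup>2"
    by (rule not_quadratic_growth_imp_sequence) blast
  have "(\<lambda>n. e n * t n) \<longlonglongrightarrow> 0 * 0"
    using e t(3) by (rule tendsto_mult)
  moreover have "maxfun f (xs + t n *\<^sub>R u n) \<le> maxfun f xs + e n * t n * t n" for n
    using descent[of n] by (simp add: power2_eq_square mult.assoc)
  ultimately have "h \<in> critical_cone A K G DG f fx xs"
    using critical_cone_memberI[OF xs_int t u(1), of "\<lambda>n. e n * t n"] feasible by simp
  with u(2) obtain l M where l: "l \<in> multipliers A K G f xs" and M: "M \<in> alpha_set A DG f fx xs l"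
    and "lagrangian_hess_form fxx D2G xs l M h > 0"
    using SOSC by force
  moreover have "lagrangian_hess_form fxx D2G xs l M h \<le> 0"
    using feasible descent
    by (intro hessian_form_nonpos[OF xs_int l M t(1,3) u(1) e]) (auto simp: feasible_set_def)
  ultimately show False
    by linarith
qed

end

theorem theorem10:
  fixes A :: "'a::euclidean_space set"
    and K :: "'y::banach set"
    and f :: "'a \<Rightarrow> 'w::t2_space \<Rightarrow> real"
    and fx :: "'a \<Rightarrow> 'w \<Rightarrow> 'a"
    and fxx :: "'a \<Rightarrow> 'w \<Rightarrow> ('a \<Rightarrow>\<^sub>L 'a)"
    and G :: "'a \<Rightarrow> 'y"
    and DG :: "'a \<Rightarrow> ('a \<Rightarrow>\<^sub>L 'y)"
    and D2G :: "'a \<Rightarrow> ('a \<Rightarrow>\<^sub>L ('a \<Rightarrow>\<^sub>L 'y))"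
    and N :: "'a set"
    and xs :: 'a
  assumes A: "A \<noteq> {}" "closed A" "convex A"
    and K: "K \<noteq> {}" "closed K" "convex K" "cone K"
    and W: "compact (UNIV :: 'w set)"
    and f_deriv: "\<And>x \<omega>. ((\<lambda>y. f y \<omega>) has_derivative (\<lambda>h. fx x \<omega> \<bullet> h)) (at x)"
    and f_cont: "continuous_on UNIV (\<lambda>(x, \<omega>). f x \<omega>)"
    and fx_cont: "continuous_on UNIV (\<lambda>(x, \<omega>). fx x \<omega>)"
    and G_deriv: "\<And>x. (G has_derivative blinfun_apply (DG x)) (at x)"
    and DG_cont: "continuous_on UNIV DG"
    and N: "open N" "xs \<in> N"
    and f_deriv2: "\<And>x \<omega>. x \<in> N \<Longrightarrow> ((\<lambda>y. fx y \<omega>) has_derivative blinfun_apply (fxx x \<omega>)) (at x)"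
    and fxx_cont: "continuous_on (N \<times> UNIV) (\<lambda>(x, \<omega>). fxx x \<omega>)"
    and G_deriv2: "\<And>x. x \<in> N \<Longrightarrow> (DG has_derivative blinfun_apply (D2G x)) (at x)"
    and D2G_cont: "continuous_on N D2G"
    and xs_int: "xs \<in> interior A"
    and xs_feas: "xs \<in> feasible_set A K G"
    and Lam_ne: "multipliers A K G f xs \<noteq> {}"
    and SOSC: "\<And>h. h \<in> critical_cone A K G DG f fx xs - {0} \<Longrightarrow>
        \<exists>l \<in> multipliers A K G f xs. \<exists>M \<in> alpha_set A DG f fx xs l.
           lagrangian_hess_form fxx D2G xs l M h > 0"
  shows "(\<exists>U. open U \<and> xs \<in> U \<and> (\<forall>x \<in> U \<inter> feasible_set A K G. maxfun f x \<ge> maxfun f xs)) \<and>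
         (\<exists>\<rho> > 0. \<exists>U. open U \<and> xs \<in> U \<and>
            (\<forall>x \<in> U \<inter> feasible_set A K G. maxfun f x \<ge> maxfun f xs + \<rho> * (norm (x - xs))\<^sup>2))"
proof -
  interpret maxfun_problem f fx fxx G DG D2G N xs
    using W f_deriv f_cont fx_cont G_deriv N f_deriv2 fxx_cont G_deriv2 D2G_cont
    by unfold_locales
  have "\<exists>\<rho> > 0. \<exists>U. open U \<and> xs \<in> U \<and>
      (\<forall>x \<in> U \<inter> feasible_set A K G. maxfun f x \<ge> maxfun f xs + \<rho> * (norm (x - xs))\<^sup>2)"
    using xs_int SOSC by (rule second_order_growth)
  moreover have "\<rho> * (norm (x - xs))\<^sup>2 \<ge> 0" if "\<rho> > 0" for \<rho> x
    using that by simp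
  ultimately show ?thesis
    by (meson add_increasing2 order_trans order_refl)
qed

end
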